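(* Let $n=1$, $d=2$, $u_1$ a positive integer and $u_2=1$, and suppose the constants are chosen so that the point $V_2=(\lambda^{(1)}_2,\lambda^{(c)}_2)$ lies in the interior of the solid cone $K_1=\{(a,b)\in\mathbb R\times\mathbb C: a-\lambda^{(1)}_1/u_1\geqslant|b-\lambda^{(c)}_1/u_1|\}$. Then $N$ acts freely on $\mu^{-1}(0)$, condition (S) holds, so $M=\mu^{-1}(0)/N$ is a smooth $4$-manifold, and the induced hypersymplectic structure on $M$ is non-degenerate everywhere if and only if $u_1=1$.
   Context: Setting: $\mathbb C^{2,2}=\mathbb C^2\times\mathbb C^2$ with coordinates $(z,w)$, $g=\mathrm{Re}\sum_k(dz_k\,d\bar z_k-dw_k\,d\bar w_k)$, $I(z,w)=(iz,-iw)$, $S(z,w)=(w,z)$, $T=IS$, $\omega_A(Y,Z)=g(Y,AZ)$; $\mathbb T^2$ acts by $(z_k,w_k)\mapsto(e^{i\theta_k}z_k,e^{i\theta_k}w_k)$. With $u_1,u_2\in\mathbb Z$, $\beta\colon\mathbb R^2\to\mathbb R$, $e_k\mapsto u_k$, $\mathfrak n=\ker\beta$ with inclusion $\iota$, and $N\subset\mathbb T^2$ the kernel of the induced homomorphism $\mathbb T^2\to\mathbb T^1$. Fix real $\lambda^{(j)}_k$, $\lambda^{(c)}_k=\lambda^{(2)}_k+i\lambda^{(3)}_k$; $\mu_I(z,w)=\sum_k(\tfrac12(|z_k|^2+|w_k|^2)+\lambda^{(1)}_k)\iota^*e_k$, $(\mu_S+i\mu_T)(z,w)=\sum_k(iz_k\bar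 w_k+\lambda^{(c)}_k)\iota^*e_k$ (identifying $\mathbb R^2$ with its dual). Condition (S): at no $p\in\mu^{-1}(0)$ is there nonzero $(X_1,X_2,X_3)\in\mathfrak n^3$ with $(IX_1+SX_2+TX_3)_p=0$. The induced forms $\omega'_A$ on $M$ satisfy $\pi^*\omega'_A=\omega_A|_{\mu^{-1}(0)}$; non-degeneracy means all three are non-degenerate at every point. *)

theory Defs
  imports "HOL-Analysis.Analysis"
begin

text \<open>Points (and tangent vectors) of C^{2,2} = C^2 x C^2, written ((z1,z2),(w1,w2)).
  The torus T^2 and its Lie algebra R^2 are represented by angle pairs in real x real.\<close>

type_synonym pt = "(complex \<times> complex) \<times> (complex \<times> complex)"

definition zz1 :: "pt \<Rightarrow> complex" where "zz1 p = fst (fst p)"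
definition zz2 :: "pt \<Rightarrow> complex" where "zz2 p = snd (fst p)"
definition ww1 :: "pt \<Rightarrow> complex" where "ww1 p = fst (snd p)"
definition ww2 :: "pt \<Rightarrow> complex" where "ww2 p = snd (snd p)"

definition hs_g :: "pt \<Rightarrow> pt \<Rightarrow> real" where
  "hs_g Y Z = Re (zz1 Y * cnj (zz1 Z) + zz2 Y * cnj (zz2 Z)
                 - ww1 Y * cnj (ww1 Z) - ww2 Y * cnj (ww2 Z))"

definition I_op :: "pt \<Rightarrow> pt" where
  "I_op p = ((\<i> * zz1 p, \<i> * zz2 p), (- \<i> * ww1 p, - \<i> * ww2 p))"

definition S_op :: "pt \<Rightarrow> pt" where
  "S_op p = ((ww1 p, ww2 p), (zz1 p, zz2 p))"

definition T_op :: "pt \<Rightarrow> pt" where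
  "T_op p = I_op (S_op p)"

definition omega :: "(pt \<Rightarrow> pt) \<Rightarrow> pt \<Rightarrow> pt \<Rightarrow> real" where
  "omega A Y Z = hs_g Y (A Z)"

definition torus_act :: "real \<times> real \<Rightarrow> pt \<Rightarrow> pt" where
  "torus_act \<theta> p = ((cis (fst \<theta>) * zz1 p, cis (snd \<theta>) * zz2 p),
                      (cis (fst \<theta>) * ww1 p, cis (snd \<theta>) * ww2 p))"

text \<open>Fundamental vector field X_p = d/dt torus_act (t X) p at t = 0.\<close>
definition fund :: "real \<times> real \<Rightarrow> pt \<Rightarrow> pt" where
  "fund X p = ((\<i> * of_real (fst X) * zz1 p, \<i> * of_real (snd X) * zz2 p),
               (\<i> * of_real (fst X) * ww1 p, \<i> * of_real (snd X) * ww2 p))"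

definition beta :: "int \<times> int \<Rightarrow> real \<times> real \<Rightarrow> real" where
  "beta u X = of_int (fst u) * fst X + of_int (snd u) * snd X"

definition nlie :: "int \<times> int \<Rightarrow> (real \<times> real) set" where
  "nlie u = {X. beta u X = 0}"

text \<open>N = kernel of the induced homomorphism T^2 -> T^1, (theta1,theta2) |-> u1 theta1 + u2 theta2,
  as a set of angle representatives.\<close>
definition Ngrp :: "int \<times> int \<Rightarrow> (real \<times> real) set" where
  "Ngrp u = {\<theta>. \<exists>m::int. of_int (fst u) * fst \<theta> + of_int (snd u) * snd \<theta> = 2 * pi * of_int m}"

definition torus_identity :: "real \<times> real \<Rightarrow> bool" where
  "torus_identity \<theta> \<longleftrightarrow> (\<exists>m1 m2::int. fst \<theta> = 2 * pi * of_int m1 \<and> snd \<theta> = 2 * pi * of_int m2)"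

text \<open>Pairings of mu_I(p) and (mu_S + i mu_T)(p) (elements of n^*) with X in n.\<close>
definition muI :: "real \<times> real \<Rightarrow> pt \<Rightarrow> real \<times> real \<Rightarrow> real" where
  "muI lam1 p X =
     ((1/2) * ((cmod (zz1 p))\<^sup>2 + (cmod (ww1 p))\<^sup>2) + fst lam1) * fst X
   + ((1/2) * ((cmod (zz2 p))\<^sup>2 + (cmod (ww2 p))\<^sup>2) + snd lam1) * snd X"

definition muC :: "complex \<times> complex \<Rightarrow> pt \<Rightarrow> real \<times> real \<Rightarrow> complex" where
  "muC lamc p X =
     (\<i> * zz1 p * cnj (ww1 p) + fst lamc) * of_real (fst X)
   + (\<i> * zz2 p * cnj (ww2 p) + snd lamc) * of_real (snd X)"

definition mu_zero :: "int \<times> int \<Rightarrow> real \<times> real \<Rightarrow> complex \<times> complex \<Rightarrow> pt set" where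
  "mu_zero u lam1 lamc = {p. \<forall>X \<in> nlie u. muI lam1 p X = 0 \<and> muC lamc p X = 0}"

definition N_acts_freely :: "int \<times> int \<Rightarrow> real \<times> real \<Rightarrow> complex \<times> complex \<Rightarrow> bool" where
  "N_acts_freely u lam1 lamc \<longleftrightarrow>
     (\<forall>p \<in> mu_zero u lam1 lamc. \<forall>\<theta> \<in> Ngrp u. torus_act \<theta> p = p \<longrightarrow> torus_identity \<theta>)"

definition condS :: "int \<times> int \<Rightarrow> real \<times> real \<Rightarrow> complex \<times> complex \<Rightarrow> bool" where
  "condS u lam1 lamc \<longleftrightarrow>
     (\<forall>p \<in> mu_zero u lam1 lamc. \<forall>X1 \<in> nlie u. \<forall>X2 \<in> nlie u. \<forall>X3 \<in> nlie u.
        I_op (fund X1 p) + S_op (fund X2 p) + T_op (fund X3 p) = 0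
        \<longrightarrow> X1 = 0 \<and> X2 = 0 \<and> X3 = 0)"

text \<open>Tangent space of mu^{-1}(0) at p, as the kernel of d mu_p (the level is regular by (S)).\<close>
definition level_tangent :: "int \<times> int \<Rightarrow> real \<times> real \<Rightarrow> complex \<times> complex \<Rightarrow> pt \<Rightarrow> pt set" where
  "level_tangent u lam1 lamc p =
     {v. \<forall>X \<in> nlie u. frechet_derivative (\<lambda>q. muI lam1 q X) (at p) v = 0
                     \<and> frechet_derivative (\<lambda>q. muC lamc q X) (at p) v = 0}"

text \<open>omega'_A is non-degenerate at pi(p) iff the radical of omega_A restricted to
  T_p mu^{-1}(0) lies in ker d pi_p = tangent space {X_p | X in n} of the N-orbit.\<close>
definition induced_nondeg_at ::
  "int \<times> int \<Rightarrow> real \<times> real \<Rightarrow> complex \<times> complex \<Rightarrow> (pt \<Rightarrow> pt) \<Rightarrow> pt \<Rightarrow> bool" where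
  "induced_nondeg_at u lam1 lamc A p \<longleftrightarrow>
     (\<forall>v \<in> level_tangent u lam1 lamc p.
        (\<forall>w \<in> level_tangent u lam1 lamc p. omega A v w = 0)
        \<longrightarrow> (\<exists>X \<in> nlie u. v = fund X p))"

definition induced_structure_nondeg :: "int \<times> int \<Rightarrow> real \<times> real \<Rightarrow> complex \<times> complex \<Rightarrow> bool" where
  "induced_structure_nondeg u lam1 lamc \<longleftrightarrow>
     (\<forall>A \<in> {I_op, S_op, T_op}. \<forall>p \<in> mu_zero u lam1 lamc. induced_nondeg_at u lam1 lamc A p)"

definition coneK1 :: "real \<Rightarrow> real \<times> real \<Rightarrow> complex \<times> complex \<Rightarrow> (real \<times> complex) set" where
  "coneK1 u1 lam1 lamc =
     {(a, b). a - fst lam1 / u1 \<ge> cmod (b - fst lamc / of_real u1)}"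

end

theory Submission
  imports Defs
begin

text \<open>
  For u = (u1, 1) the Lie algebra of N is spanned by X = (1, -u1), so mu^-1(0) is cut out by
  |z1|^2 + |w1|^2 - u1 (|z2|^2 + |w2|^2) = 2 \<alpha> and i (z1 conj w1 - u1 z2 conj w2) = \<gamma>, and the
  cone condition reads |\<gamma>| < \<alpha>.  As \<alpha> > 0, (z1, w1) \<noteq> 0 on the level set, whence freeness.
  Moreover |\<gamma>| < \<alpha> forces |z_k| \<noteq> |w_k| for some k, which gives condition (S), because a
  combination x1 I + x2 S + x3 T of the split quaternions can only kill vectors with |z_k| = |w_k|.
  By the moment map equations the level set has tangent space the g-orthogonal complement of
  I e, S e, T e, where e = X_p.  If g(e, e) \<noteq> 0 the radical of each
  \<omega>_A on it is spanned by e, while if g(e, e) = 0 the vector S e lies in the radical of \<omega>_I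
  without being tangent to the orbit.  So non-degeneracy means that no orbit in mu^-1(0) is null.
  For u1 = 1 a null orbit would violate |\<gamma>| < \<alpha> by an elementary inequality, whereas for u1 > 1
  one writes down a null orbit with z2 = 0 by solving a quadratic equation.
\<close>

lemma pt_coords [simp]:
  "zz1 ((a, b), (c, d)) = a" "zz2 ((a, b), (c, d)) = b" "ww1 ((a, b), (c, d)) = c" "ww2 ((a, b), (c, d)) = d"
  by (simp_all add: zz1_def zz2_def ww1_def ww2_def)

lemma pt_eq_iff: "p = q \<longleftrightarrow> zz1 p = zz1 q \<and> zz2 p = zz2 q \<and> ww1 p = ww1 q \<and> ww2 p = ww2 q"
  by (cases p; cases q) (auto simp: zz1_def zz2_def ww1_def ww2_def)

lemma coords_linear [simp]:
  "zz1 (a + b) = zz1 a + zz1 b" "zz2 (a + b) = zz2 a + zz2 b" "ww1 (a + b) = ww1 a + ww1 b" "ww2 (a + b) = ww2 a + ww2 b"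
  "zz1 (a - b) = zz1 a - zz1 b" "zz2 (a - b) = zz2 a - zz2 b" "ww1 (a - b) = ww1 a - ww1 b" "ww2 (a - b) = ww2 a - ww2 b"
  "zz1 (- a) = - zz1 a" "zz2 (- a) = - zz2 a" "ww1 (- a) = - ww1 a" "ww2 (- a) = - ww2 a"
  "zz1 (x *\<^sub>R a) = of_real x * zz1 a" "zz2 (x *\<^sub>R a) = of_real x * zz2 a"
  "ww1 (x *\<^sub>R a) = of_real x * ww1 a" "ww2 (x *\<^sub>R a) = of_real x * ww2 a"
  "zz1 0 = 0" "zz2 0 = 0" "ww1 0 = 0" "ww2 0 = 0"
  by (simp_all add: zz1_def zz2_def ww1_def ww2_def scaleR_conv_of_real)

lemma coords_ops [simp]:
  "zz1 (I_op p) = \<i> * zz1 p" "zz2 (I_op p) = \<i> * zz2 p" "ww1 (I_op p) = - \<i> * ww1 p" "ww2 (I_op p) = - \<i> * ww2 p"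
  "zz1 (S_op p) = ww1 p" "zz2 (S_op p) = ww2 p" "ww1 (S_op p) = zz1 p" "ww2 (S_op p) = zz2 p"
  "zz1 (T_op p) = \<i> * ww1 p" "zz2 (T_op p) = \<i> * ww2 p" "ww1 (T_op p) = - \<i> * zz1 p" "ww2 (T_op p) = - \<i> * zz2 p"
  "zz1 (fund X p) = \<i> * of_real (fst X) * zz1 p" "zz2 (fund X p) = \<i> * of_real (snd X) * zz2 p"
  "ww1 (fund X p) = \<i> * of_real (fst X) * ww1 p" "ww2 (fund X p) = \<i> * of_real (snd X) * ww2 p"
  by (simp_all add: I_op_def S_op_def T_op_def fund_def)

lemma ops_linear:
  "I_op (a + b) = I_op a + I_op b" "S_op (a + b) = S_op a + S_op b" "T_op (a + b) = T_op a + T_op b"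
  "I_op (a - b) = I_op a - I_op b" "S_op (a - b) = S_op a - S_op b" "T_op (a - b) = T_op a - T_op b"
  "I_op (x *\<^sub>R a) = x *\<^sub>R I_op a" "S_op (x *\<^sub>R a) = x *\<^sub>R S_op a" "T_op (x *\<^sub>R a) = x *\<^sub>R T_op a"
  by (simp_all add: pt_eq_iff algebra_simps)

lemma ops_compose:
  "I_op (I_op Y) = - Y" "S_op (S_op Y) = Y" "T_op (T_op Y) = Y"
  "I_op (S_op Y) = T_op Y" "I_op (T_op Y) = - S_op Y" "S_op (I_op Y) = - T_op Y"
  "S_op (T_op Y) = - I_op Y" "T_op (I_op Y) = S_op Y" "T_op (S_op Y) = I_op Y"
  by (simp_all add: pt_eq_iff algebra_simps)

lemma fund_scaleR: "fund (x *\<^sub>R X) p = x *\<^sub>R fund X p"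
  by (simp add: pt_eq_iff)

lemma hs_g_expand: "hs_g Y Z = Re (zz1 Y) * Re (zz1 Z) + Im (zz1 Y) * Im (zz1 Z)
   + Re (zz2 Y) * Re (zz2 Z) + Im (zz2 Y) * Im (zz2 Z)
   - Re (ww1 Y) * Re (ww1 Z) - Im (ww1 Y) * Im (ww1 Z)
   - Re (ww2 Y) * Re (ww2 Z) - Im (ww2 Y) * Im (ww2 Z)"
  by (simp add: hs_g_def)

lemma hs_g_linear:
  "hs_g Y (a + b) = hs_g Y a + hs_g Y b" "hs_g Y (a - b) = hs_g Y a - hs_g Y b"
  "hs_g Y (x *\<^sub>R a) = x * hs_g Y a" "hs_g Y (- a) = - hs_g Y a"
  "hs_g (a + b) Y = hs_g a Y + hs_g b Y" "hs_g (a - b) Y = hs_g a Y - hs_g b Y"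
  "hs_g (x *\<^sub>R a) Y = x * hs_g a Y" "hs_g (- a) Y = - hs_g a Y"
  by (simp_all add: hs_g_expand algebra_simps)

lemma hs_g_commute: "hs_g Y Z = hs_g Z Y"
  by (simp add: hs_g_expand algebra_simps)

lemma hs_g_skew:
  "hs_g Y (I_op Z) = - hs_g (I_op Y) Z" "hs_g Y (S_op Z) = - hs_g (S_op Y) Z" "hs_g Y (T_op Z) = - hs_g (T_op Y) Z"
  by (simp_all add: hs_g_expand algebra_simps)

lemma hs_g_ops_orthogonal:
  "hs_g (I_op Y) (S_op Y) = 0" "hs_g (I_op Y) (T_op Y) = 0" "hs_g (S_op Y) (T_op Y) = 0"
  "hs_g (S_op Y) (I_op Y) = 0" "hs_g (T_op Y) (I_op Y) = 0" "hs_g (T_op Y) (S_op Y) = 0"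
  "hs_g Y (I_op Y) = 0" "hs_g Y (S_op Y) = 0" "hs_g Y (T_op Y) = 0"
  "hs_g (I_op Y) (I_op Y) = hs_g Y Y" "hs_g (S_op Y) (S_op Y) = - hs_g Y Y" "hs_g (T_op Y) (T_op Y) = - hs_g Y Y"
  by (simp_all add: hs_g_expand algebra_simps)

lemma hs_g_nondegenerate:
  assumes "\<And>w. hs_g y w = 0"
  shows "y = 0"
proof -
  have "hs_g y ((zz1 y, zz2 y), (- ww1 y, - ww2 y)) = (cmod (zz1 y))\<^sup>2 + (cmod (zz2 y))\<^sup>2 + (cmod (ww1 y))\<^sup>2 + (cmod (ww2 y))\<^sup>2"
    by (simp add: hs_g_expand cmod_power2 power2_eq_square[symmetric])
  then have "(cmod (zz1 y))\<^sup>2 + (cmod (zz2 y))\<^sup>2 + (cmod (ww1 y))\<^sup>2 + (cmod (ww2 y))\<^sup>2 = 0"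
    using assms by simp
  then show ?thesis
    by (simp add: pt_eq_iff add_nonneg_eq_0_iff)
qed

lemma bounded_linear_coords: "bounded_linear zz1" "bounded_linear zz2" "bounded_linear ww1" "bounded_linear ww2"
  unfolding zz1_def zz2_def ww1_def ww2_def
  by (auto intro!: bounded_linear_compose[OF bounded_linear_fst] bounded_linear_compose[OF bounded_linear_snd]
      bounded_linear_fst bounded_linear_snd simp: o_def)

lemma has_derivative_coords:
  "(zz1 has_derivative zz1) F" "(zz2 has_derivative zz2) F" "(ww1 has_derivative ww1) F" "(ww2 has_derivative ww2) F"
  using bounded_linear_coords by (auto intro: bounded_linear_imp_has_derivative)

lemma has_derivative_cmod_power2:
  assumes "bounded_linear f"
  shows "((\<lambda>q. (cmod (f q))\<^sup>2) has_derivative (\<lambda>v. 2 * Re (f q * cnj (f v)))) (at q)"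
proof -
  have f: "(f has_derivative f) (at q)"
    using assms by (rule bounded_linear_imp_has_derivative)
  have "((\<lambda>q. f q \<bullet> f q) has_derivative (\<lambda>v. f q \<bullet> f v + f v \<bullet> f q)) (at q)"
    by (rule has_derivative_inner[OF f f])
  then show ?thesis
    by (simp add: power2_norm_eq_inner inner_complex_def algebra_simps)
qed

lemma muI_has_derivative:
  "((\<lambda>q. muI lam1 q X) has_derivative (\<lambda>v. - hs_g v (I_op (fund X p)))) (at p)"
proof -
  have "((\<lambda>q. muI lam1 q X) has_derivative
     (\<lambda>v. ((1/2) * (2 * Re (zz1 p * cnj (zz1 v)) + 2 * Re (ww1 p * cnj (ww1 v))) + 0) * fst X
        + ((1/2) * (2 * Re (zz2 p * cnj (zz2 v)) + 2 * Re (ww2 p * cnj (ww2 v))) + 0) * snd X)) (at p)"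
    unfolding muI_def
    by (intro has_derivative_add has_derivative_mult_left has_derivative_mult_right has_derivative_const
        has_derivative_cmod_power2 bounded_linear_coords)
  then show ?thesis
    by (rule has_derivative_eq_rhs) (simp add: fun_eq_iff hs_g_expand algebra_simps)
qed

lemma muC_has_derivative:
  "((\<lambda>q. muC lamc q X) has_derivative
     (\<lambda>v. - Complex (hs_g v (S_op (fund X p))) (hs_g v (T_op (fund X p))))) (at p)"
proof -
  have "((\<lambda>q. muC lamc q X) has_derivative
     (\<lambda>v. ((\<i> * zz1 p * cnj (ww1 v) + \<i> * zz1 v * cnj (ww1 p)) + 0) * of_real (fst X)
        + ((\<i> * zz2 p * cnj (ww2 v) + \<i> * zz2 v * cnj (ww2 p)) + 0) * of_real (snd X))) (at p)"
    unfolding muC_def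
    by (intro has_derivative_add has_derivative_mult_left has_derivative_mult has_derivative_mult_right
        has_derivative_const has_derivative_cnj has_derivative_coords)
  then show ?thesis
    by (rule has_derivative_eq_rhs) (simp add: fun_eq_iff complex_eq_iff hs_g_expand algebra_simps)
qed

definition quat_orth :: "pt \<Rightarrow> pt set" where
  "quat_orth e = {w. hs_g w (I_op e) = 0 \<and> hs_g w (S_op e) = 0 \<and> hs_g w (T_op e) = 0}"

lemma level_tangent_eq: "level_tangent u lam1 lamc p = (\<Inter>X \<in> nlie u. quat_orth (fund X p))"
  unfolding level_tangent_def quat_orth_def
    frechet_derivative_at[OF muI_has_derivative, symmetric] frechet_derivative_at[OF muC_has_derivative, symmetric]
  by (auto simp: complex_eq_iff)

text \<open>I e, S e, T e are pairwise g-orthogonal with g-squares g(e, e), -g(e, e), -g(e, e).\<close>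

lemma quat_orth_projection:
  assumes E: "hs_g e e \<noteq> 0"
  shows "w - (hs_g w (I_op e) / hs_g e e) *\<^sub>R I_op e + (hs_g w (S_op e) / hs_g e e) *\<^sub>R S_op e
           + (hs_g w (T_op e) / hs_g e e) *\<^sub>R T_op e \<in> quat_orth e"
  using E by (simp add: quat_orth_def hs_g_linear hs_g_ops_orthogonal hs_g_commute[of "I_op e" "S_op e"]
      hs_g_commute[of "I_op e" "T_op e"] hs_g_commute[of "S_op e" "T_op e"])

lemma radical_quat_orth_in_span:
  assumes E: "hs_g e e \<noteq> 0" and A: "A \<in> {I_op, S_op, T_op}"
    and v: "v \<in> quat_orth e" and rad: "\<forall>w \<in> quat_orth e. omega A v w = 0"
  shows "v = (hs_g v e / hs_g e e) *\<^sub>R e"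
proof -
  define c where "c = hs_g v e / hs_g e e"
  have vI: "hs_g v (I_op e) = 0" and vS: "hs_g v (S_op e) = 0" and vT: "hs_g v (T_op e) = 0"
    using v by (simp_all add: quat_orth_def)
  have A_skew: "hs_g y (A z) = - hs_g (A y) z" for y z
    using A by (auto simp: hs_g_skew)
  have A_linear: "A (x *\<^sub>R y) = x *\<^sub>R A y" for x y
    using A by (auto simp: ops_linear)
  have "hs_g (A v - c *\<^sub>R A e) w = 0" for w
  proof -
    let ?P = "w - (hs_g w (I_op e) / hs_g e e) *\<^sub>R I_op e + (hs_g w (S_op e) / hs_g e e) *\<^sub>R S_op e
           + (hs_g w (T_op e) / hs_g e e) *\<^sub>R T_op e"
    have "hs_g v (A ?P) = 0"
      using rad quat_orth_projection[OF E] by (simp add: omega_def)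
    moreover have "hs_g v (A ?P) = hs_g v (A w) + hs_g w (A e) / hs_g e e * hs_g v e"
      using A by (auto simp: ops_linear ops_compose hs_g_linear vI vS vT hs_g_commute[of v e])
    ultimately have "hs_g v (A w) + hs_g w (A e) / hs_g e e * hs_g v e = 0"
      by simp
    then show ?thesis
      by (simp add: hs_g_linear A_skew[of v w] c_def hs_g_commute[of w "A e"] algebra_simps)
  qed
  then have "A v = A (c *\<^sub>R e)"
    using hs_g_nondegenerate[of "A v - c *\<^sub>R A e"] by (simp add: A_linear)
  then have "A (A v) = A (A (c *\<^sub>R e))"
    by simp
  then show ?thesis
    using A by (auto simp: ops_compose c_def)
qed

lemma null_S_op_in_radical:
  assumes "hs_g e e = 0"
  shows "S_op e \<in> quat_orth e" and "\<forall>w \<in> quat_orth e. omega I_op (S_op e) w = 0"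
proof -
  show "S_op e \<in> quat_orth e"
    using assms by (simp add: quat_orth_def hs_g_ops_orthogonal)
  have "omega I_op (S_op e) w = - hs_g w (T_op e)" for w
    by (simp add: omega_def hs_g_skew(1)[of "S_op e"] ops_compose hs_g_commute[of "T_op e"])
  then show "\<forall>w \<in> quat_orth e. omega I_op (S_op e) w = 0"
    by (simp add: quat_orth_def)
qed

lemma split_quaternion_kernel_C2:
  fixes z w :: complex and x1 x2 x3 :: real
  assumes z: "\<i> * x1 * z + (x2 + \<i> * x3) * w = 0" and w: "(x2 - \<i> * x3) * z - \<i> * x1 * w = 0"
    and unbalanced: "cmod z \<noteq> cmod w"
  shows "x1 = 0 \<and> x2 = 0 \<and> x3 = 0"
proof -
  define q where "q = cmod (x2 + \<i> * x3)"
  have "x2 - \<i> * x3 = cnj (x2 + \<i> * x3)"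
    by (simp add: complex_eq_iff)
  then have "cmod (x2 - \<i> * x3) = q"
    by (simp only: q_def complex_mod_cnj)
  then have "\<bar>x1\<bar> * cmod z = q * cmod w" "\<bar>x1\<bar> * cmod w = q * cmod z"
    using arg_cong[OF z[unfolded add_eq_0_iff], of cmod] arg_cong[OF w[unfolded right_minus_eq], of cmod]
    by (simp_all add: norm_mult q_def)
  then have "(\<bar>x1\<bar> + q) * (cmod z - cmod w) = 0"
    by (simp add: algebra_simps)
  then have "\<bar>x1\<bar> + q = 0"
    using unbalanced by simp
  then have "x1 = 0" "x2 + \<i> * x3 = 0"
    unfolding q_def by (smt (verit) norm_ge_zero norm_eq_zero)+
  then show ?thesis
    by (simp add: complex_eq_iff)
qed

lemma split_quaternion_kernel:
  assumes "I_op (x1 *\<^sub>R Y) + S_op (x2 *\<^sub>R Y) + T_op (x3 *\<^sub>R Y) = 0"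
    and "cmod (zz1 Y) \<noteq> cmod (ww1 Y) \<or> cmod (zz2 Y) \<noteq> cmod (ww2 Y)"
  shows "x1 = 0 \<and> x2 = 0 \<and> x3 = 0"
  using assms(2)
proof
  assume "cmod (zz1 Y) \<noteq> cmod (ww1 Y)"
  moreover have "zz1 (I_op (x1 *\<^sub>R Y) + S_op (x2 *\<^sub>R Y) + T_op (x3 *\<^sub>R Y)) = 0"
    "ww1 (I_op (x1 *\<^sub>R Y) + S_op (x2 *\<^sub>R Y) + T_op (x3 *\<^sub>R Y)) = 0"
    using assms(1) by simp_all
  ultimately show ?thesis
    by (intro split_quaternion_kernel_C2) (simp_all add: algebra_simps)
next
  assume "cmod (zz2 Y) \<noteq> cmod (ww2 Y)"
  moreover have "zz2 (I_op (x1 *\<^sub>R Y) + S_op (x2 *\<^sub>R Y) + T_op (x3 *\<^sub>R Y)) = 0"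
    "ww2 (I_op (x1 *\<^sub>R Y) + S_op (x2 *\<^sub>R Y) + T_op (x3 *\<^sub>R Y)) = 0"
    using assms(1) by simp_all
  ultimately show ?thesis
    by (intro split_quaternion_kernel_C2) (simp_all add: algebra_simps)
qed

lemma S_op_eigenvector_balanced:
  assumes "S_op Y = x *\<^sub>R Y"
  shows "cmod (zz1 Y) = cmod (ww1 Y) \<and> cmod (zz2 Y) = cmod (ww2 Y)"
proof -
  have "cmod (f (S_op Y)) = \<bar>x\<bar> * cmod (f Y)" if "f \<in> {zz1, zz2, ww1, ww2}" for f
    using that by (auto simp: assms norm_mult)
  then have "cmod (ww1 Y) = \<bar>x\<bar> * cmod (zz1 Y)" "cmod (zz1 Y) = \<bar>x\<bar> * cmod (ww1 Y)"
    "cmod (ww2 Y) = \<bar>x\<bar> * cmod (zz2 Y)" "cmod (zz2 Y) = \<bar>x\<bar> * cmod (ww2 Y)"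
    by (metis coords_ops(5-8) insertCI)+
  then have "(1 + \<bar>x\<bar>) * (cmod (zz1 Y) - cmod (ww1 Y)) = 0" "(1 + \<bar>x\<bar>) * (cmod (zz2 Y) - cmod (ww2 Y)) = 0"
    by (simp_all add: algebra_simps)
  then show ?thesis
    by (smt (verit) mult_eq_0_iff)
qed

lemma null_squares_gap_le:
  fixes a b c d :: real
  assumes nonneg: "a \<ge> 0" "b \<ge> 0" "c \<ge> 0" "d \<ge> 0"
    and null: "a\<^sup>2 - b\<^sup>2 = d\<^sup>2 - c\<^sup>2" and le: "c\<^sup>2 + d\<^sup>2 \<le> a\<^sup>2 + b\<^sup>2"
  shows "(a\<^sup>2 + b\<^sup>2) - (c\<^sup>2 + d\<^sup>2) \<le> 2 * (a * b - c * d)"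
proof -
  define P Q where "P = a\<^sup>2 + b\<^sup>2" and "Q = c\<^sup>2 + d\<^sup>2"
  have "(P - Q) * (P + Q) = ((a\<^sup>2 - b\<^sup>2)\<^sup>2 - (d\<^sup>2 - c\<^sup>2)\<^sup>2) + 4 * ((a * b)\<^sup>2 - (c * d)\<^sup>2)"
    by (simp add: P_def Q_def power2_eq_square algebra_simps)
  also have "\<dots> = 4 * ((a * b)\<^sup>2 - (c * d)\<^sup>2)"
    using null by simp
  also have "\<dots> = 4 * (a * b - c * d) * (a * b + c * d)"
    by (simp add: power2_eq_square algebra_simps)
  finally have PQ: "(P - Q) * (P + Q) = 4 * (a * b - c * d) * (a * b + c * d)" .
  have "2 * (a * b + c * d) \<le> P + Q"
    using sum_squares_ge_zero[of "a - b" 0] sum_squares_ge_zero[of "c - d" 0]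
    by (simp add: P_def Q_def power2_eq_square algebra_simps)
  then have bound: "(P - Q) * (2 * (a * b + c * d)) \<le> 4 * (a * b - c * d) * (a * b + c * d)"
    using PQ le mult_left_mono[of "2 * (a * b + c * d)" "P + Q" "P - Q"] by (simp add: P_def Q_def)
  show ?thesis
  proof (cases "a * b + c * d = 0")
    case True
    then have "a * b = 0" "c * d = 0"
      using nonneg by (simp_all add: add_nonneg_eq_0_iff)
    moreover have "P - Q = 0 \<or> P + Q = 0"
      using PQ True by simp
    ultimately show ?thesis
      using le by (auto simp: P_def Q_def)
  next
    case False
    then have "a * b + c * d > 0"
      using nonneg by (simp add: order_less_le)
    moreover have "(P - Q) * (a * b + c * d) \<le> (2 * (a * b - c * d)) * (a * b + c * d)"
      using bound by (simp add: algebra_simps)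
    ultimately show ?thesis
      by (simp add: P_def Q_def)
  qed
qed

lemma quadratic_has_positive_root:
  fixes D b c :: real
  assumes "D > 0" "c > 0"
  shows "\<exists>s > 0. D * s\<^sup>2 - b * s = c"
proof (intro exI conjI)
  define R where "R = sqrt (b\<^sup>2 + 4 * D * c)"
  have "R > \<bar>b\<bar>"
    unfolding R_def using assms by (intro real_less_rsqrt) (simp add: power2_abs)
  then show "(b + R) / (2 * D) > 0"
    using assms by simp
  have "R\<^sup>2 = b\<^sup>2 + 4 * D * c"
    unfolding R_def using assms by (simp add: add_nonneg_nonneg)
  moreover have "D * ((b + R) / (2 * D))\<^sup>2 - b * ((b + R) / (2 * D)) = (R\<^sup>2 - b\<^sup>2) / (4 * D)"
    using assms by (simp add: field_simps power2_eq_square)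
  ultimately show "D * ((b + R) / (2 * D))\<^sup>2 - b * ((b + R) / (2 * D)) = c"
    using assms by simp
qed

lemma interior_coneK1_strict:
  assumes r: "r > 0" and h: "(a, c) \<in> interior (coneK1 r lam1 lamc)"
  shows "cmod (of_real r * c - fst lamc) < r * a - fst lam1"
proof -
  obtain \<epsilon> where \<epsilon>: "\<epsilon> > 0" "ball (a, c) \<epsilon> \<subseteq> coneK1 r lam1 lamc"
    using h mem_interior by blast
  have "(a - \<epsilon>/2, c) \<in> ball (a, c) \<epsilon>"
    using \<epsilon> by (simp add: dist_Pair_Pair dist_real_def)
  then have "cmod (c - fst lamc / of_real r) \<le> a - \<epsilon>/2 - fst lam1 / r"
    using \<epsilon> by (auto simp: coneK1_def)
  then have "r * cmod (c - fst lamc / of_real r) < r * (a - fst lam1 / r)"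
    using \<epsilon> r by simp
  moreover have "cmod (of_real r * c - fst lamc) = r * cmod (c - fst lamc / of_real r)"
  proof -
    have "of_real r * c - fst lamc = of_real r * (c - fst lamc / of_real r)"
      using r by (simp add: field_simps)
    then show ?thesis
      using r by (simp add: norm_mult)
  qed
  ultimately show ?thesis
    using r by (simp add: right_diff_distrib)
qed

lemma nlie_u1_one: "X \<in> nlie (u1, 1) \<longleftrightarrow> X = fst X *\<^sub>R (1, - real_of_int u1)"
  by (cases X) (auto simp: nlie_def beta_def algebra_simps)

lemma mu_zero_u1_one_iff:
  "p \<in> mu_zero (u1, 1) lam1 lamc \<longleftrightarrow>
     muI lam1 p (1, - real_of_int u1) = 0 \<and> muC lamc p (1, - real_of_int u1) = 0"
    (is "_ \<longleftrightarrow> ?level")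
proof
  show "?level" if "p \<in> mu_zero (u1, 1) lam1 lamc"
    using that by (simp add: mu_zero_def nlie_u1_one)
next
  assume level: ?level
  have "muI lam1 p (x *\<^sub>R X) = x * muI lam1 p X" "muC lamc p (x *\<^sub>R X) = of_real x * muC lamc p X" for x X
    by (simp_all add: muI_def muC_def algebra_simps)
  then have "muI lam1 p X = 0 \<and> muC lamc p X = 0" if "X \<in> nlie (u1, 1)" for X
    using level that nlie_u1_one by (metis mult_zero_right)
  then show "p \<in> mu_zero (u1, 1) lam1 lamc"
    by (simp add: mu_zero_def)
qed

lemma level_tangent_u1_one:
  "level_tangent (u1, 1) lam1 lamc p = quat_orth (fund (1, - real_of_int u1) p)"
  unfolding level_tangent_eq
proof (rule antisym)
  show "(\<Inter>X \<in> nlie (u1, 1). quat_orth (fund X p)) \<subseteq> quat_orth (fund (1, - real_of_int u1) p)"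
    by (rule INF_lower) (simp add: nlie_u1_one)
  have "quat_orth (fund X p) \<subseteq> quat_orth (fund (x *\<^sub>R X) p)" for x X
    by (auto simp: quat_orth_def fund_scaleR ops_linear hs_g_linear)
  then show "quat_orth (fund (1, - real_of_int u1) p) \<subseteq> (\<Inter>X \<in> nlie (u1, 1). quat_orth (fund X p))"
    using nlie_u1_one by (metis INF_greatest)
qed

lemma hs_g_fund_self:
  "hs_g (fund (1, - r) p) (fund (1, - r) p) =
     (cmod (zz1 p))\<^sup>2 - (cmod (ww1 p))\<^sup>2 + r\<^sup>2 * ((cmod (zz2 p))\<^sup>2 - (cmod (ww2 p))\<^sup>2)"
  unfolding hs_g_expand cmod_power2 by (simp add: power2_eq_square algebra_simps)

locale cone_setting =
  fixes u1 :: int and lam1 :: "real \<times> real" and lamc :: "complex \<times> complex"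
  assumes u1_pos: "u1 > 0"
    and in_cone: "(snd lam1, snd lamc) \<in> interior (coneK1 (real_of_int u1) lam1 lamc)"
begin

abbreviation r :: real where "r \<equiv> real_of_int u1"

definition \<alpha> :: real where "\<alpha> = r * snd lam1 - fst lam1"

definition \<gamma> :: complex where "\<gamma> = of_real r * snd lamc - fst lamc"

abbreviation level :: "pt set" where "level \<equiv> mu_zero (u1, 1) lam1 lamc"

abbreviation orbit_vector :: "pt \<Rightarrow> pt" where "orbit_vector p \<equiv> fund (1, - r) p"

lemma r_pos: "r > 0"
  using u1_pos by simp

lemma norm_\<gamma>_less_\<alpha>: "cmod \<gamma> < \<alpha>"
  using interior_coneK1_strict[OF r_pos in_cone] by (simp add: \<alpha>_def \<gamma>_def)

lemma \<alpha>_pos: "\<alpha> > 0"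
  using norm_\<gamma>_less_\<alpha> norm_ge_zero[of \<gamma>] by linarith

lemma level_iff:
  "p \<in> level \<longleftrightarrow>
     (cmod (zz1 p))\<^sup>2 + (cmod (ww1 p))\<^sup>2 - r * ((cmod (zz2 p))\<^sup>2 + (cmod (ww2 p))\<^sup>2) = 2 * \<alpha>
     \<and> \<i> * (zz1 p * cnj (ww1 p) - of_real r * (zz2 p * cnj (ww2 p))) = \<gamma>"
proof -
  have "muI lam1 p (1, - r) = 0 \<longleftrightarrow>
     (cmod (zz1 p))\<^sup>2 + (cmod (ww1 p))\<^sup>2 - r * ((cmod (zz2 p))\<^sup>2 + (cmod (ww2 p))\<^sup>2) = 2 * \<alpha>"
    by (auto simp: muI_def \<alpha>_def algebra_simps)
  moreover have "muC lamc p (1, - r) =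
      \<i> * (zz1 p * cnj (ww1 p) - of_real r * (zz2 p * cnj (ww2 p))) - \<gamma>"
    by (simp add: muC_def \<gamma>_def algebra_simps)
  ultimately show ?thesis
    by (simp add: mu_zero_u1_one_iff)
qed

lemma level_products_le:
  assumes "p \<in> level"
  shows "cmod (zz1 p) * cmod (ww1 p) - r * (cmod (zz2 p) * cmod (ww2 p)) \<le> cmod \<gamma>"
proof -
  have "\<gamma> = \<i> * (zz1 p * cnj (ww1 p) - of_real r * (zz2 p * cnj (ww2 p)))"
    using assms by (simp add: level_iff)
  then have "cmod \<gamma> = cmod (zz1 p * cnj (ww1 p) - of_real r * (zz2 p * cnj (ww2 p)))"
    by (simp add: norm_mult)
  also have "\<dots> \<ge> cmod (zz1 p * cnj (ww1 p)) - cmod (of_real r * (zz2 p * cnj (ww2 p)))"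
    by (rule norm_triangle_ineq2)
  finally show ?thesis
    using r_pos by (simp add: norm_mult)
qed

lemma level_first_pair_nonzero:
  assumes "p \<in> level"
  shows "zz1 p \<noteq> 0 \<or> ww1 p \<noteq> 0"
proof (rule ccontr)
  assume "\<not> ?thesis"
  then have "- r * ((cmod (zz2 p))\<^sup>2 + (cmod (ww2 p))\<^sup>2) = 2 * \<alpha>"
    using assms by (simp add: level_iff)
  moreover have "r * ((cmod (zz2 p))\<^sup>2 + (cmod (ww2 p))\<^sup>2) \<ge> 0"
    using r_pos by simp
  ultimately show False
    using \<alpha>_pos by linarith
qed

lemma level_unbalanced:
  assumes "p \<in> level"
  shows "cmod (zz1 p) \<noteq> cmod (ww1 p) \<or> cmod (zz2 p) \<noteq> cmod (ww2 p)"
proof (rule ccontr)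
  assume "\<not> ?thesis"
  then have "\<alpha> = cmod (zz1 p) * cmod (ww1 p) - r * (cmod (zz2 p) * cmod (ww2 p))"
    using assms by (simp add: level_iff power2_eq_square algebra_simps)
  then show False
    using level_products_le[OF assms] norm_\<gamma>_less_\<alpha> by linarith
qed

lemma N_acts_freely_holds: "N_acts_freely (u1, 1) lam1 lamc"
  unfolding N_acts_freely_def
proof (intro ballI impI)
  fix p \<theta> assume p: "p \<in> level" and \<theta>: "\<theta> \<in> Ngrp (u1, 1)" and fixed: "torus_act \<theta> p = p"
  have "cis (fst \<theta>) * zz1 p = zz1 p" "cis (fst \<theta>) * ww1 p = ww1 p"
    using arg_cong[OF fixed, of zz1] arg_cong[OF fixed, of ww1] by (simp_all add: torus_act_def)
  then have "cis (fst \<theta>) = 1"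
    using level_first_pair_nonzero[OF p] by (metis mult_cancel_right2)
  then obtain n :: int where n: "fst \<theta> = 2 * pi * of_int n"
    using cos_one_2pi_int[of "fst \<theta>"] by (auto simp: cis.sel mult_ac dest: arg_cong[of _ _ Re])
  obtain m :: int where "of_int u1 * fst \<theta> + snd \<theta> = 2 * pi * of_int m"
    using \<theta> by (auto simp: Ngrp_def)
  then have "snd \<theta> = 2 * pi * of_int (m - u1 * n)"
    using n by (simp add: algebra_simps)
  with n show "torus_identity \<theta>"
    unfolding torus_identity_def by blast
qed

lemma condS_holds: "condS (u1, 1) lam1 lamc"
  unfolding condS_def
proof (intro ballI impI)
  fix p X1 X2 X3 assume p: "p \<in> level" and X: "X1 \<in> nlie (u1, 1)" "X2 \<in> nlie (u1, 1)" "X3 \<in> nlie (u1, 1)"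
    and kernel: "I_op (fund X1 p) + S_op (fund X2 p) + T_op (fund X3 p) = 0"
  have "fund X p = fst X *\<^sub>R orbit_vector p" if "X \<in> nlie (u1, 1)" for X
    using that nlie_u1_one fund_scaleR by metis
  then have "I_op (fst X1 *\<^sub>R orbit_vector p) + S_op (fst X2 *\<^sub>R orbit_vector p)
      + T_op (fst X3 *\<^sub>R orbit_vector p) = 0"
    using kernel X by simp
  moreover have "cmod (zz1 (orbit_vector p)) \<noteq> cmod (ww1 (orbit_vector p))
      \<or> cmod (zz2 (orbit_vector p)) \<noteq> cmod (ww2 (orbit_vector p))"
    using level_unbalanced[OF p] r_pos by (auto simp: norm_mult)
  ultimately have "fst X1 = 0 \<and> fst X2 = 0 \<and> fst X3 = 0"
    by (rule split_quaternion_kernel)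
  then show "X1 = 0 \<and> X2 = 0 \<and> X3 = 0"
    using X nlie_u1_one by (metis scale_zero_left)
qed


lemma induced_structure_nondeg_iff_orbits_nonnull:
  "induced_structure_nondeg (u1, 1) lam1 lamc \<longleftrightarrow>
     (\<forall>p \<in> level. hs_g (orbit_vector p) (orbit_vector p) \<noteq> 0)"
proof
  assume nondeg: "induced_structure_nondeg (u1, 1) lam1 lamc"
  show "\<forall>p \<in> level. hs_g (orbit_vector p) (orbit_vector p) \<noteq> 0"
  proof (intro ballI notI)
    fix p assume p: "p \<in> level" and null: "hs_g (orbit_vector p) (orbit_vector p) = 0"
    have "induced_nondeg_at (u1, 1) lam1 lamc I_op p"
      using nondeg p by (simp add: induced_structure_nondeg_def)
    then obtain X where "X \<in> nlie (u1, 1)" "S_op (orbit_vector p) = fund X p"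
      using null_S_op_in_radical[OF null] by (auto simp: induced_nondeg_at_def level_tangent_u1_one)
    then have "S_op (orbit_vector p) = fst X *\<^sub>R orbit_vector p"
      using nlie_u1_one fund_scaleR by metis
    then have "cmod (zz1 (orbit_vector p)) = cmod (ww1 (orbit_vector p))
        \<and> cmod (zz2 (orbit_vector p)) = cmod (ww2 (orbit_vector p))"
      by (rule S_op_eigenvector_balanced)
    then have "cmod (zz1 p) = cmod (ww1 p) \<and> cmod (zz2 p) = cmod (ww2 p)"
      using r_pos by (simp add: norm_mult)
    then show False
      using level_unbalanced[OF p] by simp
  qed
next
  assume nonnull: "\<forall>p \<in> level. hs_g (orbit_vector p) (orbit_vector p) \<noteq> 0"
  show "induced_structure_nondeg (u1, 1) lam1 lamc"
    unfolding induced_structure_nondeg_def induced_nondeg_at_def level_tangent_u1_one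
  proof (intro ballI impI)
    fix A p v assume A: "A \<in> {I_op, S_op, T_op}" and p: "p \<in> level"
      and v: "v \<in> quat_orth (orbit_vector p)" and rad: "\<forall>w \<in> quat_orth (orbit_vector p). omega A v w = 0"
    define c where "c = hs_g v (orbit_vector p) / hs_g (orbit_vector p) (orbit_vector p)"
    have "v = c *\<^sub>R orbit_vector p"
      using radical_quat_orth_in_span[OF nonnull[rule_format, OF p] A v rad] unfolding c_def .
    then have "v = fund (c *\<^sub>R (1, - r)) p"
      by (simp only: fund_scaleR)
    moreover have "c *\<^sub>R (1, - r) \<in> nlie (u1, 1)"
      by (simp add: nlie_u1_one)
    ultimately show "\<exists>X \<in> nlie (u1, 1). v = fund X p"
      by blast
  qed
qed

lemma orbits_nonnull_if_u1_eq_1: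
  assumes "u1 = 1" and p: "p \<in> level"
  shows "hs_g (orbit_vector p) (orbit_vector p) \<noteq> 0"
proof
  have r: "r = 1"
    using assms(1) by simp
  assume "hs_g (orbit_vector p) (orbit_vector p) = 0"
  then have null: "(cmod (zz1 p))\<^sup>2 - (cmod (ww1 p))\<^sup>2 = (cmod (ww2 p))\<^sup>2 - (cmod (zz2 p))\<^sup>2"
    by (simp add: hs_g_fund_self r)
  have "(cmod (zz1 p))\<^sup>2 + (cmod (ww1 p))\<^sup>2 - ((cmod (zz2 p))\<^sup>2 + (cmod (ww2 p))\<^sup>2) = 2 * \<alpha>"
    using p by (simp add: level_iff r)
  then have "2 * \<alpha> \<le> 2 * (cmod (zz1 p) * cmod (ww1 p) - cmod (zz2 p) * cmod (ww2 p))"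
    using null_squares_gap_le[OF _ _ _ _ null] \<alpha>_pos by simp
  then show False
    using level_products_le[OF p] norm_\<gamma>_less_\<alpha> by (simp add: r)
qed

lemma null_orbit_if_u1_gt_1:
  assumes "u1 > 1"
  shows "\<exists>p \<in> level. hs_g (orbit_vector p) (orbit_vector p) = 0"
proof -
  text \<open>With z2 = 0 the unknowns X = |z1|^2, Y = |w1|^2, s = |w2|^2 must satisfy X + Y - r s = 2 \<alpha>,
    X Y = |\<gamma>|^2 and, for a null orbit, X - Y = r^2 s; eliminating X and Y leaves the quadratic for s.\<close>
  have r: "r > 1"
    using assms by simp
  have "r ^ 4 - r\<^sup>2 = r\<^sup>2 * (r\<^sup>2 - 1)"
    by (simp add: power2_eq_square power4_eq_xxxx algebra_simps)
  then have "(r ^ 4 - r\<^sup>2) / 4 > 0"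
    using r by (simp add: one_less_power)
  moreover have "\<alpha>\<^sup>2 - (cmod \<gamma>)\<^sup>2 > 0"
    using norm_\<gamma>_less_\<alpha> by (simp add: power_strict_mono)
  ultimately obtain s where s: "s > 0" "(r ^ 4 - r\<^sup>2) / 4 * s\<^sup>2 - \<alpha> * r * s = \<alpha>\<^sup>2 - (cmod \<gamma>)\<^sup>2"
    using quadratic_has_positive_root by blast
  define X Y where "X = \<alpha> + (r + r\<^sup>2) * s / 2" and "Y = \<alpha> + (r - r\<^sup>2) * s / 2"
  have X: "X > 0"
    using \<alpha>_pos r s by (simp add: X_def add_pos_nonneg)
  have XY: "X * Y = (cmod \<gamma>)\<^sup>2"
    using s by (simp add: X_def Y_def power2_eq_square power4_eq_xxxx field_simps)
  define p :: pt where "p = ((sqrt X, 0), (\<i> * cnj \<gamma> / sqrt X, sqrt s))"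
  have "(cmod (ww1 p))\<^sup>2 = (cmod \<gamma>)\<^sup>2 / X"
    using X by (simp add: p_def norm_divide norm_mult power_divide)
  also have "\<dots> = Y"
    using X XY by (simp add: field_simps)
  finally have norms: "(cmod (zz1 p))\<^sup>2 = X" "(cmod (ww1 p))\<^sup>2 = Y" "zz2 p = 0" "(cmod (ww2 p))\<^sup>2 = s"
    using X s by (simp_all add: p_def)
  have "\<i> * (zz1 p * cnj (ww1 p)) = \<gamma>"
    using X by (simp add: p_def field_simps)
  then have "p \<in> level"
    using norms by (simp add: level_iff X_def Y_def field_simps)
  moreover have "hs_g (orbit_vector p) (orbit_vector p) = 0"
    using norms by (simp add: hs_g_fund_self X_def Y_def field_simps power2_eq_square)
  ultimately show ?thesis
    by blast
qed

end

theorem mainTheorem18: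
  fixes u1 :: int and lam1 :: "real \<times> real" and lamc :: "complex \<times> complex"
  assumes "u1 > 0"
    and "(snd lam1, snd lamc) \<in> interior (coneK1 (real_of_int u1) lam1 lamc)"
  shows "N_acts_freely (u1, 1) lam1 lamc \<and> condS (u1, 1) lam1 lamc
         \<and> (induced_structure_nondeg (u1, 1) lam1 lamc \<longleftrightarrow> u1 = 1)"
proof -
  interpret cone_setting u1 lam1 lamc
    using assms by unfold_locales
  have "induced_structure_nondeg (u1, 1) lam1 lamc \<longleftrightarrow> u1 = 1"
  proof
    assume nondeg: "induced_structure_nondeg (u1, 1) lam1 lamc"
    show "u1 = 1"
    proof (rule ccontr)
      assume "u1 \<noteq> 1"
      then obtain p where "p \<in> level" "hs_g (orbit_vector p) (orbit_vector p) = 0"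
        using null_orbit_if_u1_gt_1 assms(1) by fastforce
      then show False
        using nondeg induced_structure_nondeg_iff_orbits_nonnull by blast
    qed
  next
    assume "u1 = 1"
    then show "induced_structure_nondeg (u1, 1) lam1 lamc"
      using orbits_nonnull_if_u1_eq_1 induced_structure_nondeg_iff_orbits_nonnull by blast
  qed
  then show ?thesis
    using N_acts_freely_holds condS_holds by blast
qed

end
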